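(* Let $\mathcal N\in\mathrm{Ch}(A'B',AB)$ be no-signaling from $A'$ to $B$. Then \[ S^\downarrow_\infty(R_AA|R_BB)_{\Phi^{\mathcal N}}-\log|A'|=S^{\not\to}_\infty[A|B]_{\mathcal N}\le S_\infty[A|B]_{\mathcal N}. \]
   Context: All systems are finite-dimensional; $|X|$ denotes dimension; $\log$ base 2; $\mathrm{St}(X)$ density operators; $\mathrm{Ch}(X',X)$ quantum channels. Maximally entangled state $\Phi_{RX}:=\frac1{|X|}\sum_{i,j}|ii\rangle\langle jj|$; Choi state $\Phi^{\mathcal N}_{R_AAR_BB}:=(\mathrm{id}\otimes\mathcal N)(\Phi_{R_AA'}\otimes\Phi_{R_BB'})$. $\mathcal R^{\mathbb 1}_{A'\to A}(X):=\operatorname{tr}(X)\mathbb 1_A$. $D_\infty(\rho\|\sigma):=\log\inf\{\lambda:\rho\le\lambda\sigma\}$; for a channel $\mathcal M$ and CP map $\mathcal M'$, $D_\infty[\mathcal M\|\mathcal M']:=\sup_{\rho\in\mathrm{St}(RX')}D_\infty((\mathrm{id}\otimes\mathcal M)(\rho)\|(\mathrm{id}\otimes\mathcal M')(\rho))$. $S_\infty[A|B]_{\mathcal N}:=-\inf_{\mathcal Q\in\mathrm{Ch}(B',B)}D_\infty[\mathcal N\|\mathcal R^{\mathbb 1}_{A'\to A}\otimes\mathcal Q]$; $S^{\not\to}_\infty[A|B]_{\mathcal N}:=-D_\infty[\mathcal N\|\mathcal R^{\mathbb1}_{A\to A}\circ\mathcal N]$ with $(\mathcal R^{\mathbb1}_{A\to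 A}\circ\mathcal N)(X)=\mathbb 1_A\otimes\operatorname{tr}_A\mathcal N(X)$. $S^\downarrow_\infty(X|Y)_\rho:=-D_\infty(\rho_{XY}\|\mathbb 1_X\otimes\rho_Y)$. $\mathcal N$ is no-signaling from $A'$ to $B$ if there is $\mathcal Q^{\mathcal N}\in\mathrm{Ch}(B',B)$ with $\operatorname{tr}_A\circ\mathcal N=\operatorname{tr}_{A'}\otimes\mathcal Q^{\mathcal N}$. *)

theory Defs
  imports "Jordan_Normal_Form.Matrix" "HOL-Library.Extended_Real"
begin

text \<open>Finite-dimensional quantum systems are represented by their dimensions (nat);
operators on a system of dimension n are complex n x n matrices. A composite system XY
of dimensions dX, dY has dimension dX*dY with the index of (x,y) being x*dY + y
(Kronecker ordering). Linear maps between operator spaces are functions on complex mat;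
only their values on matrices of the correct input dimension are relevant.\<close>

definition mtrace :: "complex mat \<Rightarrow> complex" where
  "mtrace A = (\<Sum>i<dim_row A. A $$ (i,i))"

definition psd :: "complex mat \<Rightarrow> bool" where
  "psd A \<longleftrightarrow> square_mat A \<and>
     (\<forall>v \<in> carrier_vec (dim_row A). Im ((A *\<^sub>v v) \<bullet>c v) = 0 \<and> Re ((A *\<^sub>v v) \<bullet>c v) \<ge> 0)"

definition loewner_le :: "complex mat \<Rightarrow> complex mat \<Rightarrow> bool" where
  "loewner_le A B \<longleftrightarrow> dim_row A = dim_row B \<and> dim_col A = dim_col B \<and> psd (B - A)"

definition density :: "nat \<Rightarrow> complex mat \<Rightarrow> bool" where
  "density n \<rho> \<longleftrightarrow> \<rho> \<in> carrier_mat n n \<and> psd \<rho> \<and> mtrace \<rho> = 1"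

definition kron :: "complex mat \<Rightarrow> complex mat \<Rightarrow> complex mat" where
  "kron A B = mat (dim_row A * dim_row B) (dim_col A * dim_col B)
     (\<lambda>(i,j). A $$ (i div dim_row B, j div dim_col B) * B $$ (i mod dim_row B, j mod dim_col B))"

definition mat_unit :: "nat \<Rightarrow> nat \<Rightarrow> nat \<Rightarrow> complex mat" where
  "mat_unit n i j = mat n n (\<lambda>(p,q). if p = i \<and> q = j then 1 else 0)"

definition ptrace_first :: "nat \<Rightarrow> nat \<Rightarrow> complex mat \<Rightarrow> complex mat" where
  "ptrace_first dX dY \<rho> = mat dY dY (\<lambda>(i,j). \<Sum>x<dX. \<rho> $$ (x*dY + i, x*dY + j))"

definition map_tensor :: "nat \<Rightarrow> nat \<Rightarrow> nat \<Rightarrow> nat \<Rightarrow> (complex mat \<Rightarrow> complex mat)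
     \<Rightarrow> (complex mat \<Rightarrow> complex mat) \<Rightarrow> complex mat \<Rightarrow> complex mat" where
  "map_tensor n1 m1 n2 m2 M1 M2 X = mat (m1*m2) (m1*m2) (\<lambda>(p,q).
     \<Sum>i<n1. \<Sum>j<n1. \<Sum>k<n2. \<Sum>l<n2.
       X $$ (i*n2 + k, j*n2 + l) * (kron (M1 (mat_unit n1 i j)) (M2 (mat_unit n2 k l))) $$ (p,q))"

definition id_tensor :: "nat \<Rightarrow> nat \<Rightarrow> nat \<Rightarrow> (complex mat \<Rightarrow> complex mat) \<Rightarrow> complex mat \<Rightarrow> complex mat" where
  "id_tensor k n m M = map_tensor k k n m id M"

definition is_linear_map :: "nat \<Rightarrow> nat \<Rightarrow> (complex mat \<Rightarrow> complex mat) \<Rightarrow> bool" where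
  "is_linear_map n m M \<longleftrightarrow>
     (\<forall>X \<in> carrier_mat n n. M X \<in> carrier_mat m m) \<and>
     (\<forall>X \<in> carrier_mat n n. \<forall>Y \<in> carrier_mat n n. M (X + Y) = M X + M Y) \<and>
     (\<forall>X \<in> carrier_mat n n. \<forall>c. M (c \<cdot>\<^sub>m X) = c \<cdot>\<^sub>m M X)"

definition is_CP :: "nat \<Rightarrow> nat \<Rightarrow> (complex mat \<Rightarrow> complex mat) \<Rightarrow> bool" where
  "is_CP n m M \<longleftrightarrow> is_linear_map n m M \<and>
     (\<forall>k. \<forall>X \<in> carrier_mat (k*n) (k*n). psd X \<longrightarrow> psd (id_tensor k n m M X))"

definition is_channel :: "nat \<Rightarrow> nat \<Rightarrow> (complex mat \<Rightarrow> complex mat) \<Rightarrow> bool" where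
  "is_channel n m M \<longleftrightarrow> is_CP n m M \<and> (\<forall>X \<in> carrier_mat n n. mtrace (M X) = mtrace X)"

text \<open>Max-relative entropy D_infinity(rho||sigma) = log inf {lambda. rho <= lambda sigma}
 (value +infinity if the set is empty).\<close>
definition Dinf :: "complex mat \<Rightarrow> complex mat \<Rightarrow> ereal" where
  "Dinf \<rho> \<sigma> = (INF t \<in> {t::real. t > 0 \<and> loewner_le \<rho> (complex_of_real t \<cdot>\<^sub>m \<sigma>)}. ereal (log 2 t))"

definition Dchan :: "nat \<Rightarrow> nat \<Rightarrow> (complex mat \<Rightarrow> complex mat) \<Rightarrow> (complex mat \<Rightarrow> complex mat) \<Rightarrow> ereal" where
  "Dchan n m M M' = (SUP (k, \<rho>) \<in> {(k, \<rho>). density (k*n) \<rho>}.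
       Dinf (id_tensor k n m M \<rho>) (id_tensor k n m M' \<rho>))"

definition replace_one :: "nat \<Rightarrow> (complex mat \<Rightarrow> complex mat)" where
  "replace_one m X = mtrace X \<cdot>\<^sub>m 1\<^sub>m m"

text \<open>Systems: A' (dim a'), B' (dim b'), A (dim a), B (dim b); N : A'B' -> AB.\<close>

definition S_inf :: "nat \<Rightarrow> nat \<Rightarrow> nat \<Rightarrow> nat \<Rightarrow> (complex mat \<Rightarrow> complex mat) \<Rightarrow> ereal" where
  "S_inf a' b' a b N = - (INF Q \<in> {Q. is_channel b' b Q}.
      Dchan (a'*b') (a*b) N (map_tensor a' a b' b (replace_one a) Q))"

definition S_nosig :: "nat \<Rightarrow> nat \<Rightarrow> nat \<Rightarrow> nat \<Rightarrow> (complex mat \<Rightarrow> complex mat) \<Rightarrow> ereal" where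
  "S_nosig a' b' a b N = - Dchan (a'*b') (a*b) N (\<lambda>X. kron (1\<^sub>m a) (ptrace_first a b (N X)))"

definition S_down :: "nat \<Rightarrow> nat \<Rightarrow> complex mat \<Rightarrow> ereal" where
  "S_down dX dY \<rho> = - Dinf \<rho> (kron (1\<^sub>m dX) (ptrace_first dX dY \<rho>))"

text \<open>Choi state (id tensor N)(Phi_{R_A A'} tensor Phi_{R_B B'}) with its systems ordered
 R_A A R_B B. Index of (r_A, x, r_B, y) is ((r_A*a + x)*b' + r_B)*b + y.\<close>
definition choi :: "nat \<Rightarrow> nat \<Rightarrow> nat \<Rightarrow> nat \<Rightarrow> (complex mat \<Rightarrow> complex mat) \<Rightarrow> complex mat" where
  "choi a' b' a b N = mat (a'*a*b'*b) (a'*a*b'*b) (\<lambda>(p,q).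
     let y = p mod b; rB = (p div b) mod b'; x = (p div (b*b')) mod a; rA = p div (b*b'*a);
         y2 = q mod b; rB2 = (q div b) mod b'; x2 = (q div (b*b')) mod a; rA2 = q div (b*b'*a)
     in (1 / (of_nat a' * of_nat b')) *
        N (mat_unit (a'*b') (rA*b' + rB) (rA2*b' + rB2)) $$ (x*b + y, x2*b + y2))"

definition no_signaling :: "nat \<Rightarrow> nat \<Rightarrow> nat \<Rightarrow> nat \<Rightarrow> (complex mat \<Rightarrow> complex mat) \<Rightarrow> bool" where
  "no_signaling a' b' a b N \<longleftrightarrow> (\<exists>Q. is_channel b' b Q \<and>
     (\<forall>X \<in> carrier_mat (a'*b') (a'*b'). ptrace_first a b (N X) = Q (ptrace_first a' b' X)))"

end

theory Submission
  imports Defs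
begin

(*
  Let M be the map X |-> 1_A (x) tr_A N(X), so that the no-signaling entropy is -D_inf[N||M].
  Both divergences in the statement reduce to one semidefinite condition on Choi operators,
  Choi(N) <= t Choi(M).  For the channel divergence the condition suffices because every input
  state is a sum of rank-one operators (Cholesky elimination on positive semidefinite kernels),
  and it is necessary, as the maximally entangled input shows.  For the Choi state,
  no-signaling through Q gives tr_{R_A A} Phi^N = Choi(Q)/b', hence
  1 (x) tr_{R_A A} Phi^N = a' Phi^M, which accounts for the shift by log a'.  Finally
  M = R^1 (x) Q on matrix units, so D_inf[N||M] is one of the values in the infimum
  defining S_inf[A|B]_N.
*)

section \<open>Finite sums over index ranges\<close>

lemma sum_lessThan_mult:
  "(\<Sum>I<(u::nat)*v. f I) = (\<Sum>i<u. \<Sum>j<v. f (i*v + j))"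
proof -
  have "(\<Sum>I<u*v. f I) = (\<Sum>i<u. sum f {i*v..<i*v + v})"
    by (rule sum.nat_group[symmetric])
  also have "\<dots> = (\<Sum>i<u. \<Sum>j<v. f (i*v + j))"
  proof (rule sum.cong[OF refl])
    fix i show "sum f {i*v..<i*v + v} = (\<Sum>j<v. f (i*v + j))"
      using sum.atLeastLessThan_shift_0[of f "i*v" "i*v + v"] by (simp add: lessThan_atLeast0 comp_def)
  qed
  finally show ?thesis .
qed

lemma mult_add_less_mult:
  assumes "i < (k::nat)" "p < n"
  shows "i*n + p < k*n"
proof -
  have "i*n + p < Suc i * n" using assms(2) by simp
  also have "\<dots> \<le> k*n" using assms(1) by (intro mult_le_mono1) simp
  finally show ?thesis .
qed

lemma mult_add_div_mod:
  assumes "j < (m::nat)"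
  shows "(i*m + j) div m = i" "(i*m + j) mod m = j"
  using assms by simp_all

lemma mult_add_eq_mult_add_iff:
  assumes "i < (m::nat)" "j < m"
  shows "z*m + i = w*m + j \<longleftrightarrow> z = w \<and> i = j"
proof
  assume eq: "z*m + i = w*m + j"
  show "z = w \<and> i = j"
    using arg_cong[OF eq, of "\<lambda>t. t div m"] arg_cong[OF eq, of "\<lambda>t. t mod m"] assms by simp
qed simp

lemma sum_if_const: "(\<Sum>x\<in>A. if P then f x else 0) = (if P then sum f A else 0)"
  by simp

lemma sum_sum_delta:
  assumes "a < (n::nat)" "b < n"
  shows "(\<Sum>p<n. \<Sum>q<n. if p = a \<and> q = b then F p q else 0) = F a b"
  using assms by (simp add: if_if_eq_conj[symmetric] sum_if_const cong: if_cong)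

lemma sum4_delta:
  assumes "a < (k::nat)" "b < k"
  shows "(\<Sum>i<k. \<Sum>j<k. \<Sum>p<(n::nat). \<Sum>q<n. if i = a \<and> j = b then F i j p q else 0)
       = (\<Sum>p<n. \<Sum>q<n. F a b p q)"
  using assms by (simp add: if_if_eq_conj[symmetric] sum_if_const cong: if_cong)

section \<open>Positive semidefinite kernels\<close>

lemma complex_cnj_mult_self_nonneg: "0 \<le> cnj z * z"
proof -
  have "cnj z * z = of_real ((cmod z)\<^sup>2)" by (metis complex_norm_square mult.commute)
  then show ?thesis by (simp add: less_eq_complex_def)
qed

definition qform :: "nat \<Rightarrow> (nat \<Rightarrow> nat \<Rightarrow> complex) \<Rightarrow> (nat \<Rightarrow> complex) \<Rightarrow> complex" where
  "qform d A f = (\<Sum>i<d. \<Sum>j<d. cnj (f i) * A i j * f j)"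

definition psd_kernel :: "nat \<Rightarrow> (nat \<Rightarrow> nat \<Rightarrow> complex) \<Rightarrow> bool" where
  "psd_kernel d A \<longleftrightarrow> (\<forall>f. 0 \<le> qform d A f)"

lemma cscalar_prod_mult_mat_vec_eq_qform:
  assumes "A \<in> carrier_mat d d" "v \<in> carrier_vec d"
  shows "(A *\<^sub>v v) \<bullet>c v = qform d (\<lambda>i j. A $$ (i,j)) (\<lambda>i. v $ i)"
  using assms
  by (auto simp: qform_def scalar_prod_def mult_mat_vec_def sum_distrib_right sum_distrib_left
      lessThan_atLeast0 mult.commute mult.left_commute intro!: sum.cong)

lemma qform_cong:
  assumes "\<And>i. i < d \<Longrightarrow> f i = g i"
  shows "qform d A f = qform d A g"
  using assms unfolding qform_def by (intro sum.cong refl) auto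

lemma psd_iff_psd_kernel:
  assumes A: "A \<in> carrier_mat d d"
  shows "psd A \<longleftrightarrow> psd_kernel d (\<lambda>i j. A $$ (i,j))"
proof
  assume "psd A"
  then have "0 \<le> (A *\<^sub>v vec d f) \<bullet>c vec d f" for f
    using A unfolding psd_def less_eq_complex_def by auto
  then show "psd_kernel d (\<lambda>i j. A $$ (i,j))"
    unfolding psd_kernel_def using cscalar_prod_mult_mat_vec_eq_qform[OF A vec_carrier]
    by (metis (no_types, lifting) index_vec qform_cong)
next
  assume "psd_kernel d (\<lambda>i j. A $$ (i,j))"
  then have "0 \<le> (A *\<^sub>v v) \<bullet>c v" if "v \<in> carrier_vec d" for v
    unfolding psd_kernel_def using cscalar_prod_mult_mat_vec_eq_qform[OF A that] by simp
  then show "psd A"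
    using A unfolding psd_def less_eq_complex_def by auto
qed

lemma loewner_le_scale_iff_psd_kernel:
  assumes "X \<in> carrier_mat d d" "Y \<in> carrier_mat d d"
  shows "loewner_le X (c \<cdot>\<^sub>m Y) \<longleftrightarrow> psd_kernel d (\<lambda>i j. c * Y $$ (i,j) - X $$ (i,j))"
proof -
  have "c \<cdot>\<^sub>m Y - X \<in> carrier_mat d d" using assms unfolding carrier_mat_def by simp
  then have "loewner_le X (c \<cdot>\<^sub>m Y) \<longleftrightarrow> psd_kernel d (\<lambda>i j. (c \<cdot>\<^sub>m Y - X) $$ (i,j))"
    unfolding loewner_le_def using assms psd_iff_psd_kernel by simp
  also have "\<dots> \<longleftrightarrow> psd_kernel d (\<lambda>i j. c * Y $$ (i,j) - X $$ (i,j))"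
    unfolding psd_kernel_def qform_def
    by (intro iff_allI arg_cong[where f="\<lambda>z. 0 \<le> z"] sum.cong refl) (use assms in auto)
  finally show ?thesis .
qed

lemma qform_supported:
  assumes "S \<subseteq> {..<d}" "\<And>k. k \<notin> S \<Longrightarrow> f k = 0"
  shows "qform d A f = (\<Sum>k\<in>S. \<Sum>l\<in>S. cnj (f k) * A k l * f l)"
proof -
  have "qform d A f = (\<Sum>k\<in>S. \<Sum>l<d. cnj (f k) * A k l * f l)"
    unfolding qform_def using assms by (intro sum.mono_neutral_right) auto
  also have "\<dots> = (\<Sum>k\<in>S. \<Sum>l\<in>S. cnj (f k) * A k l * f l)"
    using assms by (intro sum.cong refl sum.mono_neutral_right) auto
  finally show ?thesis .
qed

lemma qform_single:
  assumes "i < d"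
  shows "qform d A (\<lambda>k. if k = i then x else 0) = cnj x * A i i * x"
  using assms by (subst qform_supported[of "{i}"]) auto

lemma qform_pair:
  assumes "i < d" "j < d" "i \<noteq> j"
  shows "qform d A (\<lambda>k. if k = i then x else if k = j then y else 0)
    = cnj x * A i i * x + cnj x * A i j * y + cnj y * A j i * x + cnj y * A j j * y"
  using assms by (subst qform_supported[of "{i,j}"]) auto

lemma psd_kernel_diag_nonneg:
  assumes "psd_kernel d A" "i < d"
  shows "0 \<le> A i i"
proof -
  have "0 \<le> qform d A (\<lambda>k. if k = i then 1 else 0)"
    using assms(1) unfolding psd_kernel_def by blast
  then show ?thesis by (simp add: qform_single[OF assms(2)])
qed

lemma psd_kernel_hermitian:
  assumes A: "psd_kernel d A" and ij: "i < d" "j < d"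
  shows "A j i = cnj (A i j)"
proof (cases "i = j")
  case True
  then show ?thesis using psd_kernel_diag_nonneg[OF A ij(1)] by (simp add: less_eq_complex_def complex_eq_iff)
next
  case False
  have "0 \<le> qform d A (\<lambda>k. if k = i then 1 else if k = j then 1 else 0)"
    and "0 \<le> qform d A (\<lambda>k. if k = i then 1 else if k = j then \<i> else 0)"
    using A unfolding psd_kernel_def by blast+
  then have "Im (A i j) + Im (A j i) = 0" "Re (A i j) - Re (A j i) = 0"
    using psd_kernel_diag_nonneg[OF A ij(1)] psd_kernel_diag_nonneg[OF A ij(2)]
    unfolding qform_pair[OF ij False] by (auto simp: less_eq_complex_def)
  then show ?thesis by (simp add: complex_eq_iff)
qed

lemma psd_kernel_zero_diag:
  assumes A: "psd_kernel d A" and ej: "e < d" "j < d" and Aee: "A e e = 0"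
  shows "A e j = 0"
proof (rule ccontr)
  assume w0: "A e j \<noteq> 0"
  then have "e \<noteq> j" using Aee by auto
  define w where "w = A e j"
  define s where "s = (Re (A j j) + 1) / (2 * (cmod w)\<^sup>2)"
  define t where "t = - of_real s * w"
  have nw: "cnj w * w = of_real ((cmod w)\<^sup>2)"
    by (metis complex_norm_square mult.commute of_real_power)
  \<comment> \<open>the test vector \<open>t \<delta>\<^sub>e + \<delta>\<^sub>j\<close> makes the form \<open>- 2 s |w|\<^sup>2 + A j j = -1\<close>\<close>
  have "0 \<le> qform d A (\<lambda>k. if k = e then t else if k = j then 1 else 0)"
    using A unfolding psd_kernel_def by blast
  also have "\<dots> = cnj t * w + cnj w * t + A j j"
    using qform_pair[OF ej \<open>e \<noteq> j\<close>, of A t 1] Aee psd_kernel_hermitian[OF A ej] w_def by simp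
  also have "\<dots> = - 2 * of_real (s * (cmod w)\<^sup>2) + A j j"
    unfolding t_def using nw by (simp add: algebra_simps)
  also have "s * (cmod w)\<^sup>2 = (Re (A j j) + 1) / 2"
    unfolding s_def using w0 w_def by simp
  finally show False by (simp add: less_eq_complex_def field_simps)
qed

lemma qform_rank_one_update:
  "qform d (\<lambda>i j. A i j - u i * v j) f
   = qform d A f - (\<Sum>i<d. cnj (f i) * u i) * (\<Sum>j<d. v j * f j)"
proof -
  have "qform d (\<lambda>i j. A i j - u i * v j) f
      = qform d A f - (\<Sum>i<d. \<Sum>j<d. (cnj (f i) * u i) * (v j * f j))"
    unfolding qform_def by (simp add: algebra_simps sum_subtractf)
  then show ?thesis by (simp add: sum_product)
qed

lemma psd_kernel_schur_complement:
  assumes A: "psd_kernel d A" and e: "e < d" "A e e \<noteq> 0"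
  shows "psd_kernel d (\<lambda>i j. A i j - A i e * A e j / A e e)"
  unfolding psd_kernel_def
proof
  fix f
  define v where "v j = A e j / A e e" for j
  define B where "B i j = A i j - A i e * v j" for i j
  define w where "w = (\<Sum>j<d. v j * f j)"
  define f' where "f' = f(e := f e - w)"
  have ve: "v e = 1" unfolding v_def using e by simp
  have B_row: "B e j = 0" and B_col: "B i e = 0" for i j
    unfolding B_def v_def using e by simp_all
  \<comment> \<open>\<open>B\<close> vanishes on row and column \<open>e\<close>, so \<open>f e\<close> can be chosen to annihilate the rank-one part\<close>
  have "qform d B f = qform d B f'"
    unfolding qform_def by (intro sum.cong refl) (auto simp: f'_def B_row B_col)
  also have "\<dots> = qform d A f' - (\<Sum>i<d. cnj (f' i) * A i e) * (\<Sum>j<d. v j * f' j)"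
    unfolding B_def by (rule qform_rank_one_update)
  also have "(\<Sum>j<d. v j * f' j) = (\<Sum>j<d. v j * f j + (if j = e then - w else 0))"
    using e by (intro sum.cong refl) (auto simp: f'_def ve right_diff_distrib)
  also have "\<dots> = 0"
    using e by (simp add: sum.distrib w_def)
  finally have "qform d B f = qform d A f'" by simp
  then show "0 \<le> qform d (\<lambda>i j. A i j - A i e * A e j / A e e) f"
    using A unfolding psd_kernel_def B_def v_def by (simp add: times_divide_eq_right)
qed

definition gram_kernel :: "nat \<Rightarrow> (nat \<Rightarrow> nat \<Rightarrow> complex) \<Rightarrow> bool" where
  "gram_kernel d A \<longleftrightarrow> (\<exists>(r::nat) U. \<forall>i<d. \<forall>j<d. A i j = (\<Sum>s<r. U s i * cnj (U s j)))"

lemma gram_kernel_add_rank_one: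
  assumes "gram_kernel d B" "\<And>i j. i < d \<Longrightarrow> j < d \<Longrightarrow> A i j = B i j + u i * cnj (u j)"
  shows "gram_kernel d A"
proof -
  obtain r :: nat and U where U: "\<forall>i<d. \<forall>j<d. B i j = (\<Sum>s<r. U s i * cnj (U s j))"
    using assms(1) unfolding gram_kernel_def by blast
  define U' where "U' s = (if s < r then U s else u)" for s
  have "\<forall>i<d. \<forall>j<d. A i j = (\<Sum>s<Suc r. U' s i * cnj (U' s j))"
    using U assms(2) by (simp add: U'_def)
  then show ?thesis unfolding gram_kernel_def by blast
qed

lemma psd_kernel_pivot_rank_one:
  assumes A: "psd_kernel d A" and idx: "e < d" "j < d"
  defines "r \<equiv> sqrt (Re (A e e))"
  shows "A i e * A e j / A e e = (A i e / of_real r) * cnj (A j e / of_real r)"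
proof -
  have "0 \<le> A e e" using psd_kernel_diag_nonneg[OF A idx(1)] .
  then have "A e e = of_real r * of_real r"
    unfolding r_def by (simp add: less_eq_complex_def complex_eq_iff)
  moreover have "A e j = cnj (A j e)" using psd_kernel_hermitian[OF A idx(2,1)] .
  ultimately have "A i e * A e j / A e e = A i e * cnj (A j e) / (of_real r * of_real r)"
    by (simp only:)
  also have "\<dots> = (A i e / of_real r) * cnj (A j e / of_real r)"
    by (simp add: complex_cnj_divide)
  finally show ?thesis .
qed

text \<open>One step of Cholesky elimination, with the Schur complement at the last pivot.\<close>
lemma psd_kernel_peel_rank_one:
  assumes A: "psd_kernel d A" and n: "n < d"
    and supp: "\<And>i j. i < d \<Longrightarrow> j < d \<Longrightarrow> Suc n \<le> i \<or> Suc n \<le> j \<Longrightarrow> A i j = 0"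
  obtains B u where "psd_kernel d B"
    and "\<And>i j. i < d \<Longrightarrow> j < d \<Longrightarrow> n \<le> i \<or> n \<le> j \<Longrightarrow> B i j = 0"
    and "\<And>i j. i < d \<Longrightarrow> j < d \<Longrightarrow> A i j = B i j + u i * cnj (u j)"
proof (cases "A n n = 0")
  case True
  have row_col: "A n j = 0" "A j n = 0" if "j < d" for j
    using psd_kernel_zero_diag[OF A n that True] psd_kernel_hermitian[OF A n that] by simp_all
  have "A i j = 0" if "i < d" "j < d" "n \<le> i \<or> n \<le> j" for i j
    using that supp[OF that(1,2)] row_col by (metis Suc_leI le_neq_implies_less)
  then show thesis using that[of A "\<lambda>_. 0"] A by simp
next
  case False
  define B where "B i j = A i j - A i n * A n j / A n n" for i j
  show thesis
  proof (rule that[of B "\<lambda>k. A k n / of_real (sqrt (Re (A n n)))"])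
    show "psd_kernel d B" unfolding B_def by (rule psd_kernel_schur_complement[OF A n False])
    show "B i j = 0" if ij: "i < d" "j < d" and "n \<le> i \<or> n \<le> j" for i j
    proof -
      consider "i = n" | "j = n" | "Suc n \<le> i" | "Suc n \<le> j"
        using \<open>n \<le> i \<or> n \<le> j\<close> by (metis Suc_leI le_neq_implies_less)
      then show ?thesis
        unfolding B_def using supp ij n False by cases auto
    qed
    show "A i j = B i j + A i n / of_real (sqrt (Re (A n n))) * cnj (A j n / of_real (sqrt (Re (A n n))))"
      if "i < d" "j < d" for i j
      unfolding B_def using psd_kernel_pivot_rank_one[OF A n that(2)] by simp
  qed
qed

lemma psd_kernel_imp_gram_kernel:
  assumes "psd_kernel d A"
  shows "gram_kernel d A"
proof -
  have "gram_kernel d A"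
    if "psd_kernel d A" "\<And>i j. i < d \<Longrightarrow> j < d \<Longrightarrow> n \<le> i \<or> n \<le> j \<Longrightarrow> A i j = 0" for n A
    using that
  proof (induction n arbitrary: A)
    case 0
    then show ?case unfolding gram_kernel_def by (intro exI[of _ 0]) simp
  next
    case (Suc n)
    show ?case
    proof (cases "n < d")
      case True
      obtain B u where "psd_kernel d B" "\<And>i j. i < d \<Longrightarrow> j < d \<Longrightarrow> n \<le> i \<or> n \<le> j \<Longrightarrow> B i j = 0"
        and "\<And>i j. i < d \<Longrightarrow> j < d \<Longrightarrow> A i j = B i j + u i * cnj (u j)"
        using psd_kernel_peel_rank_one[OF Suc.prems(1) True Suc.prems(2)] by blast
      then show ?thesis using Suc.IH gram_kernel_add_rank_one by blast
    next
      case False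
      then show ?thesis using Suc.IH[OF Suc.prems(1)] by simp
    qed
  qed
  from this[OF assms, of d] show ?thesis by simp
qed

section \<open>Matrix units and tensor products of maps\<close>

lemma mat_unit_carrier [simp]: "mat_unit n i j \<in> carrier_mat n n"
  unfolding mat_unit_def by simp

lemma mat_unit_index:
  assumes "p < n" "q < n"
  shows "mat_unit n i j $$ (p,q) = (if p = i \<and> q = j then 1 else 0)"
  using assms unfolding mat_unit_def by simp

lemma mtrace_mat_unit:
  assumes "i < n" "j < n"
  shows "mtrace (mat_unit n i j) = (if i = j then 1 else 0)"
  using assms by (simp add: mtrace_def mat_unit_def if_if_eq_conj[symmetric] cong: if_cong)

lemma kron_carrier:
  assumes "A \<in> carrier_mat n n" "B \<in> carrier_mat k k"
  shows "kron A B \<in> carrier_mat (n*k) (n*k)"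
  using assms unfolding kron_def carrier_mat_def by simp

lemma kron_index:
  assumes "A \<in> carrier_mat k k" "B \<in> carrier_mat m m" "P < k*m" "Q < k*m"
  shows "kron A B $$ (P,Q) = A $$ (P div m, Q div m) * B $$ (P mod m, Q mod m)"
  using assms unfolding kron_def by simp

lemma ptrace_first_carrier [simp]: "ptrace_first dX dY \<rho> \<in> carrier_mat dY dY"
  unfolding ptrace_first_def by simp

lemma id_tensor_carrier [simp]: "id_tensor k n m L \<rho> \<in> carrier_mat (k*m) (k*m)"
  unfolding id_tensor_def map_tensor_def by simp

lemma choi_carrier [simp]: "choi a' b' a b N \<in> carrier_mat (a'*a*b'*b) (a'*a*b'*b)"
  unfolding choi_def by simp

lemma channel_carrier:
  assumes "is_channel n m Q" "X \<in> carrier_mat n n"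
  shows "Q X \<in> carrier_mat m m"
  using assms unfolding is_channel_def is_CP_def is_linear_map_def by blast

lemma channel_zero:
  assumes "is_channel n m Q"
  shows "Q (0\<^sub>m n n) = 0\<^sub>m m m"
proof -
  have lin: "is_linear_map n m Q" using assms unfolding is_channel_def is_CP_def by simp
  have "(0::complex) \<cdot>\<^sub>m 0\<^sub>m n n = 0\<^sub>m n n" by auto
  then have "Q (0\<^sub>m n n) = 0 \<cdot>\<^sub>m Q (0\<^sub>m n n)"
    using lin unfolding is_linear_map_def by (metis zero_carrier_mat)
  also have "\<dots> = 0\<^sub>m m m"
    using channel_carrier[OF assms zero_carrier_mat] by auto
  finally show ?thesis .
qed

lemma id_tensor_cong:
  assumes "\<And>p q. p < n \<Longrightarrow> q < n \<Longrightarrow> L1 (mat_unit n p q) = L2 (mat_unit n p q)"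
  shows "id_tensor k n m L1 = id_tensor k n m L2"
  unfolding id_tensor_def map_tensor_def using assms
  by (intro ext eq_matI) (auto intro!: sum.cong)

lemma id_tensor_index:
  assumes L: "\<And>p q. p < n \<Longrightarrow> q < n \<Longrightarrow> L (mat_unit n p q) \<in> carrier_mat m m"
    and PQ: "P < k*m" "Q < k*m"
  shows "id_tensor k n m L \<rho> $$ (P,Q) =
    (\<Sum>p<n. \<Sum>q<n. \<rho> $$ (P div m * n + p, Q div m * n + q) * L (mat_unit n p q) $$ (P mod m, Q mod m))"
proof -
  have "m > 0" using PQ by (cases m) auto
  then have Pk: "P div m < k" "Q div m < k" using PQ by (auto simp: less_mult_imp_div_less)
  have "id_tensor k n m L \<rho> $$ (P,Q) =
     (\<Sum>i<k. \<Sum>j<k. \<Sum>p<n. \<Sum>q<n. \<rho> $$ (i*n + p, j*n + q) *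
         kron (mat_unit k i j) (L (mat_unit n p q)) $$ (P,Q))"
    using PQ unfolding id_tensor_def map_tensor_def by simp
  also have "\<dots> = (\<Sum>i<k. \<Sum>j<k. \<Sum>p<n. \<Sum>q<n.
      if i = P div m \<and> j = Q div m then
        \<rho> $$ (i*n + p, j*n + q) * L (mat_unit n p q) $$ (P mod m, Q mod m) else 0)"
    using kron_index[OF mat_unit_carrier L PQ] mat_unit_index[OF Pk] by (intro sum.cong refl) auto
  also have "\<dots> = (\<Sum>p<n. \<Sum>q<n. \<rho> $$ (P div m * n + p, Q div m * n + q) * L (mat_unit n p q) $$ (P mod m, Q mod m))"
    by (rule sum4_delta[OF Pk])
  finally show ?thesis .
qed

lemma id_tensor_diff_index:
  assumes "\<And>p q. p < n \<Longrightarrow> q < n \<Longrightarrow> M (mat_unit n p q) \<in> carrier_mat m m"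
    and "\<And>p q. p < n \<Longrightarrow> q < n \<Longrightarrow> N (mat_unit n p q) \<in> carrier_mat m m"
    and "P < k*m" "Q < k*m"
  shows "c * id_tensor k n m M \<rho> $$ (P,Q) - id_tensor k n m N \<rho> $$ (P,Q) =
     (\<Sum>p<n. \<Sum>q<n. \<rho> $$ (P div m * n + p, Q div m * n + q) *
        (c * M (mat_unit n p q) $$ (P mod m, Q mod m) - N (mat_unit n p q) $$ (P mod m, Q mod m)))"
  using id_tensor_index[where L=M and \<rho>=\<rho>, OF assms(1,3,4)] id_tensor_index[where L=N and \<rho>=\<rho>, OF assms(2,3,4)]
  by (simp add: sum_distrib_left sum_subtractf[symmetric] algebra_simps)

section \<open>Choi operators and the channel max-divergence\<close>

definition choi_qform :: "nat \<Rightarrow> nat \<Rightarrow> (nat \<Rightarrow> nat \<Rightarrow> nat \<Rightarrow> nat \<Rightarrow> complex) \<Rightarrow> (nat \<Rightarrow> nat \<Rightarrow> complex) \<Rightarrow> complex" where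
  "choi_qform n m C f = (\<Sum>p<n. \<Sum>x<m. \<Sum>q<n. \<Sum>y<m. cnj (f p x) * C p q x y * f q y)"

text \<open>\<open>choi_le n m N c M\<close> says that the unnormalised Choi operator
  \<open>\<Sum>\<^sub>p\<^sub>q |p\<rangle>\<langle>q| \<otimes> (c M(|p\<rangle>\<langle>q|) - N(|p\<rangle>\<langle>q|))\<close> is positive semidefinite, i.e. that
  \<open>c M - N\<close> is completely positive.\<close>
definition choi_le :: "nat \<Rightarrow> nat \<Rightarrow> (complex mat \<Rightarrow> complex mat) \<Rightarrow> complex \<Rightarrow> (complex mat \<Rightarrow> complex mat) \<Rightarrow> bool" where
  "choi_le n m N c M \<longleftrightarrow>
     (\<forall>f. 0 \<le> choi_qform n m (\<lambda>p q x y. c * M (mat_unit n p q) $$ (x,y) - N (mat_unit n p q) $$ (x,y)) f)"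

text \<open>The quadratic form of \<open>(id\<^sub>k \<otimes> L) R\<close> at \<open>v\<close>, for the map \<open>L\<close> with Choi kernel \<open>C\<close>.\<close>
definition tensor_qform :: "nat \<Rightarrow> nat \<Rightarrow> nat \<Rightarrow> (nat \<Rightarrow> nat \<Rightarrow> nat \<Rightarrow> nat \<Rightarrow> complex)
    \<Rightarrow> (nat \<Rightarrow> nat \<Rightarrow> complex) \<Rightarrow> (nat \<Rightarrow> nat \<Rightarrow> complex) \<Rightarrow> complex" where
  "tensor_qform k n m C v R = (\<Sum>i<k. \<Sum>x<m. \<Sum>j<k. \<Sum>y<m.
      cnj (v i x) * (\<Sum>p<n. \<Sum>q<n. R (i*n + p) (j*n + q) * C p q x y) * v j y)"

lemma tensor_qform_add:
  "tensor_qform k n m C v (\<lambda>I J. R1 I J + R2 I J) = tensor_qform k n m C v R1 + tensor_qform k n m C v R2"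
  unfolding tensor_qform_def by (simp add: distrib_left distrib_right sum.distrib)

lemma tensor_qform_sum:
  "tensor_qform k n m C v (\<lambda>I J. \<Sum>s<(r::nat). R s I J) = (\<Sum>s<r. tensor_qform k n m C v (R s))"
proof (induction r)
  case 0
  then show ?case by (simp add: tensor_qform_def)
next
  case (Suc r)
  then show ?case by (simp add: tensor_qform_add)
qed

lemma sum_lessThan_reorder6:
  "(\<Sum>i<(k::nat). \<Sum>x<(m::nat). \<Sum>j<k. \<Sum>y<m. \<Sum>p<(n::nat). \<Sum>q<n. F i x j y p q) =
   (\<Sum>p<n. \<Sum>x<m. \<Sum>q<n. \<Sum>y<m. \<Sum>i<k. \<Sum>j<k. (F i x j y p q :: 'a::comm_monoid_add))"
  unfolding sum.cartesian_product
  by (rule sum.reindex_bij_witness[where i="\<lambda>(p,x,q,y,i,j). (i,x,j,y,p,q)" and j="\<lambda>(i,x,j,y,p,q). (p,x,q,y,i,j)"])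
    auto

lemma tensor_qform_rank_one:
  "tensor_qform k n m C v (\<lambda>I J. u I * cnj (u J)) =
   choi_qform n m C (\<lambda>p x. \<Sum>i<k. cnj (u (i*n + p)) * v i x)"
proof -
  have "tensor_qform k n m C v (\<lambda>I J. u I * cnj (u J)) =
    (\<Sum>i<k. \<Sum>x<m. \<Sum>j<k. \<Sum>y<m. \<Sum>p<n. \<Sum>q<n.
       (u (i*n + p) * cnj (v i x)) * C p q x y * (cnj (u (j*n + q)) * v j y))"
    unfolding tensor_qform_def by (simp add: sum_distrib_left sum_distrib_right mult_ac)
  also have "\<dots> = (\<Sum>p<n. \<Sum>x<m. \<Sum>q<n. \<Sum>y<m. \<Sum>i<k. \<Sum>j<k.
       (u (i*n + p) * cnj (v i x)) * C p q x y * (cnj (u (j*n + q)) * v j y))"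
    by (rule sum_lessThan_reorder6)
  also have "\<dots> = choi_qform n m C (\<lambda>p x. \<Sum>i<k. cnj (u (i*n + p)) * v i x)"
    unfolding choi_qform_def by (simp add: sum_distrib_left sum_distrib_right mult_ac)
  finally show ?thesis .
qed

lemma tensor_qform_cong:
  assumes "\<And>I J. I < k*n \<Longrightarrow> J < k*n \<Longrightarrow> R I J = R' I J"
  shows "tensor_qform k n m C v R = tensor_qform k n m C v R'"
  unfolding tensor_qform_def using assms by (auto intro!: sum.cong simp: mult_add_less_mult)

lemma loewner_le_id_tensor_if_choi_le:
  assumes \<rho>: "\<rho> \<in> carrier_mat (k*n) (k*n)" "psd \<rho>"
    and LM: "\<And>p q. p < n \<Longrightarrow> q < n \<Longrightarrow> M (mat_unit n p q) \<in> carrier_mat m m"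
    and LN: "\<And>p q. p < n \<Longrightarrow> q < n \<Longrightarrow> N (mat_unit n p q) \<in> carrier_mat m m"
    and le: "choi_le n m N c M"
  shows "loewner_le (id_tensor k n m N \<rho>) (c \<cdot>\<^sub>m id_tensor k n m M \<rho>)"
  unfolding loewner_le_scale_iff_psd_kernel[OF id_tensor_carrier id_tensor_carrier] psd_kernel_def
proof
  fix f :: "nat \<Rightarrow> complex"
  define C where "C p q x y = c * M (mat_unit n p q) $$ (x,y) - N (mat_unit n p q) $$ (x,y)" for p q x y
  define v where "v i x = f (i*m + x)" for i x
  obtain r :: nat and U where U: "\<forall>I<k*n. \<forall>J<k*n. \<rho> $$ (I,J) = (\<Sum>s<r. U s I * cnj (U s J))"
    using psd_kernel_imp_gram_kernel \<rho> psd_iff_psd_kernel unfolding gram_kernel_def by blast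
  have "qform (k*m) (\<lambda>P Q. c * id_tensor k n m M \<rho> $$ (P,Q) - id_tensor k n m N \<rho> $$ (P,Q)) f
      = qform (k*m) (\<lambda>P Q. \<Sum>p<n. \<Sum>q<n. \<rho> $$ (P div m * n + p, Q div m * n + q) * C p q (P mod m) (Q mod m)) f"
    unfolding qform_def C_def by (intro sum.cong refl) (simp add: id_tensor_diff_index LM LN)
  also have "\<dots> = tensor_qform k n m C v (\<lambda>I J. \<rho> $$ (I,J))"
    unfolding qform_def tensor_qform_def v_def sum_lessThan_mult by simp
  also have "\<dots> = tensor_qform k n m C v (\<lambda>I J. \<Sum>s<r. U s I * cnj (U s J))"
    using U by (intro tensor_qform_cong) auto
  also have "\<dots> = (\<Sum>s<r. choi_qform n m C (\<lambda>p x. \<Sum>i<k. cnj (U s (i*n + p)) * v i x))"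
    unfolding tensor_qform_sum tensor_qform_rank_one ..
  finally show "0 \<le> qform (k*m) (\<lambda>P Q. c * id_tensor k n m M \<rho> $$ (P,Q) - id_tensor k n m N \<rho> $$ (P,Q)) f"
    using le unfolding choi_le_def C_def[symmetric] by (simp add: sum_nonneg)
qed

definition max_entangled_vec :: "nat \<Rightarrow> nat \<Rightarrow> complex" where
  "max_entangled_vec n I = (if I div n = I mod n then of_real (1 / sqrt (real n)) else 0)"

definition max_entangled :: "nat \<Rightarrow> complex mat" where
  "max_entangled n = mat (n*n) (n*n) (\<lambda>(I,J). max_entangled_vec n I * cnj (max_entangled_vec n J))"

lemma max_entangled_index:
  assumes "i < n" "p < n" "j < n" "q < n"
  shows "max_entangled n $$ (i*n + p, j*n + q) = (if i = p \<and> j = q then 1 / of_nat n else 0)"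
proof -
  have "i*n + p < n*n" "j*n + q < n*n" using mult_add_less_mult assms by auto
  moreover have "of_real (1 / sqrt (real n)) * cnj (of_real (1 / sqrt (real n))) = (1 / of_nat n :: complex)"
    by (simp flip: of_real_mult)
  ultimately show ?thesis using assms unfolding max_entangled_def max_entangled_vec_def by simp
qed

lemma psd_kernel_rank_one: "psd_kernel d (\<lambda>i j. u i * cnj (u j))"
  unfolding psd_kernel_def
proof
  fix f
  define w where "w = (\<Sum>j<d. cnj (u j) * f j)"
  have "qform d (\<lambda>i j. u i * cnj (u j)) f = (\<Sum>i<d. cnj (f i) * u i) * w"
    unfolding qform_def w_def sum_product by (simp add: mult_ac)
  also have "(\<Sum>i<d. cnj (f i) * u i) = cnj w"
    unfolding w_def by (simp add: mult.commute)
  finally show "0 \<le> qform d (\<lambda>i j. u i * cnj (u j)) f"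
    by (simp add: complex_cnj_mult_self_nonneg)
qed

lemma max_entangled_density:
  assumes "n > 0"
  shows "density (n*n) (max_entangled n)"
  unfolding density_def
proof (intro conjI)
  show carrier: "max_entangled n \<in> carrier_mat (n*n) (n*n)" unfolding max_entangled_def by simp
  have "mtrace (max_entangled n) = (\<Sum>I<n*n. max_entangled n $$ (I,I))"
    unfolding mtrace_def using carrier by simp
  also have "\<dots> = (\<Sum>i<n. \<Sum>p<n. max_entangled n $$ (i*n + p, i*n + p))"
    by (rule sum_lessThan_mult)
  also have "\<dots> = (\<Sum>i<n. \<Sum>p<n. if p = i then 1 / of_nat n else 0)"
    by (intro sum.cong refl) (auto simp: max_entangled_index)
  finally show "mtrace (max_entangled n) = 1" using assms by simp
  show "psd (max_entangled n)"
    unfolding psd_iff_psd_kernel[OF carrier]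
    using psd_kernel_rank_one[of "n*n" "max_entangled_vec n"]
    unfolding psd_kernel_def qform_def by (simp add: max_entangled_def)
qed

lemma choi_le_if_loewner_le_max_entangled:
  assumes n: "n > 0"
    and LM: "\<And>p q. p < n \<Longrightarrow> q < n \<Longrightarrow> M (mat_unit n p q) \<in> carrier_mat m m"
    and LN: "\<And>p q. p < n \<Longrightarrow> q < n \<Longrightarrow> N (mat_unit n p q) \<in> carrier_mat m m"
    and le: "loewner_le (id_tensor n n m N (max_entangled n)) (c \<cdot>\<^sub>m id_tensor n n m M (max_entangled n))"
  shows "choi_le n m N c M"
  unfolding choi_le_def
proof
  fix f
  define C where "C p q x y = c * M (mat_unit n p q) $$ (x,y) - N (mat_unit n p q) $$ (x,y)" for p q x y
  have ent: "c * id_tensor n n m M (max_entangled n) $$ (P,Q) - id_tensor n n m N (max_entangled n) $$ (P,Q)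
      = C (P div m) (Q div m) (P mod m) (Q mod m) / of_nat n"
    if "P < n*m" "Q < n*m" for P Q
  proof -
    have "m > 0" using that by (cases m) auto
    then have Pk: "P div m < n" "Q div m < n" using that by (auto simp: less_mult_imp_div_less)
    have "c * id_tensor n n m M (max_entangled n) $$ (P,Q) - id_tensor n n m N (max_entangled n) $$ (P,Q)
      = (\<Sum>p<n. \<Sum>q<n. max_entangled n $$ (P div m * n + p, Q div m * n + q) * C p q (P mod m) (Q mod m))"
      unfolding C_def using LM LN that by (rule id_tensor_diff_index)
    also have "\<dots> = (\<Sum>p<n. \<Sum>q<n. if p = P div m \<and> q = Q div m then C p q (P mod m) (Q mod m) / of_nat n else 0)"
      by (intro sum.cong refl) (auto simp: max_entangled_index Pk)
    also have "\<dots> = C (P div m) (Q div m) (P mod m) (Q mod m) / of_nat n"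
      by (rule sum_sum_delta[OF Pk])
    finally show ?thesis .
  qed
  have "0 \<le> qform (n*m) (\<lambda>P Q. c * id_tensor n n m M (max_entangled n) $$ (P,Q)
                               - id_tensor n n m N (max_entangled n) $$ (P,Q)) (\<lambda>P. f (P div m) (P mod m))"
    using le unfolding loewner_le_scale_iff_psd_kernel[OF id_tensor_carrier id_tensor_carrier] psd_kernel_def ..
  also have "\<dots> = choi_qform n m C f / of_nat n"
    unfolding qform_def choi_qform_def sum_lessThan_mult
    by (simp add: ent mult_add_less_mult sum_divide_distrib)
  finally have "0 \<le> choi_qform n m C f / of_nat n * of_nat n"
    by (intro mult_nonneg_nonneg) (auto simp: less_eq_complex_def)
  then show "0 \<le> choi_qform n m C f" unfolding C_def using n by simp
qed

lemma Dchan_eq_INF_choi_le: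
  assumes n: "n > 0"
    and LM: "\<And>p q. p < n \<Longrightarrow> q < n \<Longrightarrow> M (mat_unit n p q) \<in> carrier_mat m m"
    and LN: "\<And>p q. p < n \<Longrightarrow> q < n \<Longrightarrow> N (mat_unit n p q) \<in> carrier_mat m m"
  shows "Dchan n m N M = (INF t\<in>{t. t > 0 \<and> choi_le n m N (of_real t) M}. ereal (log 2 t))"
    (is "_ = (INF t\<in>?T. _)")
proof (rule antisym)
  show "Dchan n m N M \<le> (INF t\<in>?T. ereal (log 2 t))"
    unfolding Dchan_def
  proof (rule SUP_least, clarify)
    fix k \<rho> assume "density (k*n) \<rho>"
    then have \<rho>: "\<rho> \<in> carrier_mat (k*n) (k*n)" "psd \<rho>" by (auto simp: density_def)
    show "Dinf (id_tensor k n m N \<rho>) (id_tensor k n m M \<rho>) \<le> (INF t\<in>?T. ereal (log 2 t))"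
      unfolding Dinf_def
      by (intro INF_superset_mono) (auto intro: loewner_le_id_tensor_if_choi_le[where M=M and N=N, OF \<rho> LM LN])
  qed
next
  have "(INF t\<in>?T. ereal (log 2 t))
      \<le> Dinf (id_tensor n n m N (max_entangled n)) (id_tensor n n m M (max_entangled n))"
    unfolding Dinf_def
    by (intro INF_superset_mono) (auto intro: choi_le_if_loewner_le_max_entangled[where M=M and N=N, OF n LM LN])
  also have "\<dots> \<le> Dchan n m N M"
    unfolding Dchan_def using max_entangled_density[OF n] by (intro SUP_upper2[of "(n, max_entangled n)"]) auto
  finally show "(INF t\<in>?T. ereal (log 2 t)) \<le> Dchan n m N M" .
qed

section \<open>The Choi state of a no-signaling channel\<close>

definition no_signaling_with :: "nat \<Rightarrow> nat \<Rightarrow> nat \<Rightarrow> nat \<Rightarrow> (complex mat \<Rightarrow> complex mat) \<Rightarrow> (complex mat \<Rightarrow> complex mat) \<Rightarrow> bool" where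
  "no_signaling_with a' b' a b N Q \<longleftrightarrow> is_channel b' b Q \<and>
     (\<forall>X \<in> carrier_mat (a'*b') (a'*b'). ptrace_first a b (N X) = Q (ptrace_first a' b' X))"

definition replace_marginal :: "nat \<Rightarrow> nat \<Rightarrow> (complex mat \<Rightarrow> complex mat) \<Rightarrow> complex mat \<Rightarrow> complex mat" where
  "replace_marginal a b N X = kron (1\<^sub>m a) (ptrace_first a b (N X))"

lemma replace_marginal_carrier [simp]: "replace_marginal a b N X \<in> carrier_mat (a*b) (a*b)"
  unfolding replace_marginal_def by (rule kron_carrier) simp_all

lemma ptrace_first_mat_unit:
  assumes "pA < a'" "qA < a'" "pB < b'" "qB < b'"
  shows "ptrace_first a' b' (mat_unit (a'*b') (pA*b' + pB) (qA*b' + qB)) =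
    (if pA = qA then mat_unit b' pB qB else 0\<^sub>m b' b')"
proof (rule eq_matI)
  fix i j assume "i < dim_row (if pA = qA then mat_unit b' pB qB else 0\<^sub>m b' b')"
    "j < dim_col (if pA = qA then mat_unit b' pB qB else 0\<^sub>m b' b')"
  then have ij: "i < b'" "j < b'" by (auto simp: mat_unit_def split: if_splits)
  then have "ptrace_first a' b' (mat_unit (a'*b') (pA*b' + pB) (qA*b' + qB)) $$ (i,j)
     = (\<Sum>z<a'. mat_unit (a'*b') (pA*b' + pB) (qA*b' + qB) $$ (z*b' + i, z*b' + j))"
    unfolding ptrace_first_def by simp
  also have "\<dots> = (\<Sum>z<a'. if z = pA then (if pA = qA \<and> i = pB \<and> j = qB then 1 else 0) else 0)"
    using assms ij
    by (intro sum.cong refl) (auto simp: mat_unit_index mult_add_less_mult mult_add_eq_mult_add_iff)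
  also have "\<dots> = (if pA = qA then mat_unit b' pB qB else 0\<^sub>m b' b') $$ (i,j)"
    using assms ij by (simp add: mat_unit_index)
  finally show "ptrace_first a' b' (mat_unit (a'*b') (pA*b' + pB) (qA*b' + qB)) $$ (i,j) =
      (if pA = qA then mat_unit b' pB qB else 0\<^sub>m b' b') $$ (i,j)" .
qed (auto simp: ptrace_first_def mat_unit_def)

lemma replace_marginal_mat_unit_index:
  assumes ns: "no_signaling_with a' b' a b N Q"
    and idx: "rA < a'" "x < a" "rB < b'" "y < b" "rA2 < a'" "x2 < a" "rB2 < b'" "y2 < b"
  shows "replace_marginal a b N (mat_unit (a'*b') (rA*b' + rB) (rA2*b' + rB2)) $$ (x*b + y, x2*b + y2)
     = (if rA = rA2 \<and> x = x2 then Q (mat_unit b' rB rB2) $$ (y,y2) else 0)"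
proof -
  have "x*b + y < a*b" "x2*b + y2 < a*b" using mult_add_less_mult idx by auto
  then have "replace_marginal a b N (mat_unit (a'*b') (rA*b' + rB) (rA2*b' + rB2)) $$ (x*b + y, x2*b + y2)
     = 1\<^sub>m a $$ (x, x2) * ptrace_first a b (N (mat_unit (a'*b') (rA*b' + rB) (rA2*b' + rB2))) $$ (y, y2)"
    unfolding replace_marginal_def using idx by (simp add: kron_index[OF one_carrier_mat ptrace_first_carrier])
  also have "\<dots> = 1\<^sub>m a $$ (x, x2) * Q (if rA = rA2 then mat_unit b' rB rB2 else 0\<^sub>m b' b') $$ (y, y2)"
    using ns idx by (simp add: no_signaling_with_def ptrace_first_mat_unit mult_add_less_mult)
  finally show ?thesis
    using idx channel_zero[of b' b Q] ns unfolding no_signaling_with_def by auto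
qed

lemma choi_index_bound:
  assumes "rA < a'" "x < a" "rB < b'" "y < b"
  shows "((rA*a + x)*b' + rB)*b + y < a'*a*b'*(b::nat)"
  using assms by (intro mult_add_less_mult) auto

lemma choi_index_decode:
  assumes "x < (a::nat)" "rB < b'" "y < b"
  shows "(((rA*a + x)*b' + rB)*b + y) mod b = y"
    "((((rA*a + x)*b' + rB)*b + y) div b) mod b' = rB"
    "((((rA*a + x)*b' + rB)*b + y) div (b*b')) mod a = x"
    "(((rA*a + x)*b' + rB)*b + y) div (b*b'*a) = rA"
  using assms by (simp_all add: div_mult2_eq)

lemma choi_index:
  assumes "rA < a'" "x < a" "rB < b'" "y < b" "rA2 < a'" "x2 < a" "rB2 < b'" "y2 < b"
  shows "choi a' b' a b N $$ (((rA*a + x)*b' + rB)*b + y, ((rA2*a + x2)*b' + rB2)*b + y2) =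
    1 / (of_nat a' * of_nat b') * N (mat_unit (a'*b') (rA*b' + rB) (rA2*b' + rB2)) $$ (x*b + y, x2*b + y2)"
  using choi_index_bound[OF assms(1-4)] choi_index_bound[OF assms(5-8)]
    choi_index_decode[OF assms(2-4)] choi_index_decode[OF assms(6-8)]
  unfolding choi_def by (simp add: Let_def)

lemma ptrace_first_choi_index:
  assumes ns: "no_signaling_with a' b' a b N Q" and "a' > 0"
    and idx: "rB < b'" "y < b" "rB2 < b'" "y2 < b"
  shows "ptrace_first (a'*a) (b'*b) (choi a' b' a b N) $$ (rB*b + y, rB2*b + y2)
    = Q (mat_unit b' rB rB2) $$ (y, y2) / of_nat b'"
proof -
  have "rB*b + y < b'*b" "rB2*b + y2 < b'*b" using mult_add_less_mult idx by auto
  then have "ptrace_first (a'*a) (b'*b) (choi a' b' a b N) $$ (rB*b + y, rB2*b + y2)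
    = (\<Sum>zA<a'. \<Sum>zx<a. choi a' b' a b N $$ (((zA*a + zx)*b' + rB)*b + y, ((zA*a + zx)*b' + rB2)*b + y2))"
    unfolding ptrace_first_def sum_lessThan_mult by (simp add: algebra_simps)
  also have "\<dots> = (\<Sum>zA<a'. 1 / (of_nat a' * of_nat b') *
        ptrace_first a b (N (mat_unit (a'*b') (zA*b' + rB) (zA*b' + rB2))) $$ (y, y2))"
    unfolding ptrace_first_def using idx by (simp add: choi_index sum_distrib_left)
  also have "\<dots> = (\<Sum>zA<a'. 1 / (of_nat a' * of_nat b') * Q (mat_unit b' rB rB2) $$ (y, y2))"
    using ns idx by (intro sum.cong refl)
      (simp add: no_signaling_with_def ptrace_first_mat_unit mult_add_less_mult)
  also have "\<dots> = Q (mat_unit b' rB rB2) $$ (y, y2) / of_nat b'"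
    using \<open>a' > 0\<close> by simp
  finally show ?thesis .
qed

lemma choi_marginal_index:
  assumes ns: "no_signaling_with a' b' a b N Q" and "a' > 0"
    and idx: "rA < a'" "x < a" "rB < b'" "y < b" "rA2 < a'" "x2 < a" "rB2 < b'" "y2 < b"
  shows "kron (1\<^sub>m (a'*a)) (ptrace_first (a'*a) (b'*b) (choi a' b' a b N))
      $$ (((rA*a + x)*b' + rB)*b + y, ((rA2*a + x2)*b' + rB2)*b + y2)
     = (if rA = rA2 \<and> x = x2 then Q (mat_unit b' rB rB2) $$ (y,y2) / of_nat b' else 0)"
proof -
  define I I2 J J2 where "I = rA*a + x" and "I2 = rA2*a + x2" and "J = rB*b + y" and "J2 = rB2*b + y2"
  have ij: "I < a'*a" "I2 < a'*a" "J < b'*b" "J2 < b'*b"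
    unfolding I_def I2_def J_def J2_def using mult_add_less_mult idx by auto
  have "((rA*a + x)*b' + rB)*b + y = I*(b'*b) + J" "((rA2*a + x2)*b' + rB2)*b + y2 = I2*(b'*b) + J2"
    unfolding I_def I2_def J_def J2_def by (simp_all add: algebra_simps)
  moreover have "I*(b'*b) + J < (a'*a)*(b'*b)" "I2*(b'*b) + J2 < (a'*a)*(b'*b)"
    using mult_add_less_mult ij by auto
  ultimately have "kron (1\<^sub>m (a'*a)) (ptrace_first (a'*a) (b'*b) (choi a' b' a b N))
      $$ (((rA*a + x)*b' + rB)*b + y, ((rA2*a + x2)*b' + rB2)*b + y2)
    = 1\<^sub>m (a'*a) $$ (I, I2) * ptrace_first (a'*a) (b'*b) (choi a' b' a b N) $$ (J, J2)"
    using mult_add_div_mod[OF ij(3)] mult_add_div_mod[OF ij(4)]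
    by (simp add: kron_index[OF one_carrier_mat ptrace_first_carrier])
  then show ?thesis
    using ij idx ptrace_first_choi_index[OF ns \<open>a' > 0\<close> idx(3,4,7,8)]
    unfolding I_def I2_def J_def J2_def by (simp add: mult_add_eq_mult_add_iff)
qed

text \<open>The Choi state indexes its systems in the order \<open>R\<^sub>A A R\<^sub>B B\<close>, whereas \<open>choi_qform\<close>
  pairs the input \<open>R\<^sub>A R\<^sub>B\<close> with the output \<open>A B\<close>; the two index maps differ by a
  permutation of tensor factors.\<close>
lemma qform_choi_reorder:
  assumes K: "\<And>rA x rB y rA2 x2 rB2 y2. rA < a' \<Longrightarrow> x < a \<Longrightarrow> rB < b' \<Longrightarrow> y < b \<Longrightarrow>
      rA2 < a' \<Longrightarrow> x2 < a \<Longrightarrow> rB2 < b' \<Longrightarrow> y2 < b \<Longrightarrow>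
      K (((rA*a + x)*b' + rB)*b + y) (((rA2*a + x2)*b' + rB2)*b + y2) = C (rA*b' + rB) (rA2*b' + rB2) (x*b + y) (x2*b + y2)"
    and g: "\<And>rA x rB y. rA < a' \<Longrightarrow> x < a \<Longrightarrow> rB < b' \<Longrightarrow> y < b \<Longrightarrow>
      g (((rA*a + x)*b' + rB)*b + y) = f (rA*b' + rB) (x*b + y)"
  shows "qform (a'*a*b'*b) K g = choi_qform (a'*b') (a*(b::nat)) C f"
proof -
  have swap: "(\<Sum>rA<a'. \<Sum>x<a. \<Sum>rB<b'. \<Sum>y<b. G rA x rB y) = (\<Sum>rA<a'. \<Sum>rB<b'. \<Sum>x<a. \<Sum>y<b. (G rA x rB y :: complex))" for G
    by (rule sum.cong[OF refl], rule sum.swap)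
  have "qform (a'*a*b'*b) K g =
    (\<Sum>rA<a'. \<Sum>x<a. \<Sum>rB<b'. \<Sum>y<b. \<Sum>rA2<a'. \<Sum>x2<a. \<Sum>rB2<b'. \<Sum>y2<b.
      cnj (g (((rA*a + x)*b' + rB)*b + y)) * K (((rA*a + x)*b' + rB)*b + y) (((rA2*a + x2)*b' + rB2)*b + y2)
        * g (((rA2*a + x2)*b' + rB2)*b + y2))"
    unfolding qform_def by (simp only: sum_lessThan_mult)
  also have "\<dots> = (\<Sum>rA<a'. \<Sum>x<a. \<Sum>rB<b'. \<Sum>y<b. \<Sum>rA2<a'. \<Sum>x2<a. \<Sum>rB2<b'. \<Sum>y2<b.
      cnj (f (rA*b' + rB) (x*b + y)) * C (rA*b' + rB) (rA2*b' + rB2) (x*b + y) (x2*b + y2) * f (rA2*b' + rB2) (x2*b + y2))"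
    by (intro sum.cong refl) (simp add: K g)
  also have "\<dots> = (\<Sum>rA<a'. \<Sum>rB<b'. \<Sum>x<a. \<Sum>y<b. \<Sum>rA2<a'. \<Sum>rB2<b'. \<Sum>x2<a. \<Sum>y2<b.
      cnj (f (rA*b' + rB) (x*b + y)) * C (rA*b' + rB) (rA2*b' + rB2) (x*b + y) (x2*b + y2) * f (rA2*b' + rB2) (x2*b + y2))"
    by (simp only: swap)
  also have "\<dots> = choi_qform (a'*b') (a*b) C f"
    unfolding choi_qform_def by (simp only: sum_lessThan_mult)
  finally show ?thesis .
qed

lemma psd_kernel_iff_choi_qform_reorder:
  assumes K: "\<And>rA x rB y rA2 x2 rB2 y2. rA < a' \<Longrightarrow> x < a \<Longrightarrow> rB < b' \<Longrightarrow> y < b \<Longrightarrow>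
      rA2 < a' \<Longrightarrow> x2 < a \<Longrightarrow> rB2 < b' \<Longrightarrow> y2 < b \<Longrightarrow>
      K (((rA*a + x)*b' + rB)*b + y) (((rA2*a + x2)*b' + rB2)*b + y2) = C (rA*b' + rB) (rA2*b' + rB2) (x*b + y) (x2*b + y2)"
  shows "psd_kernel (a'*a*b'*b) K \<longleftrightarrow> (\<forall>f. 0 \<le> choi_qform (a'*b') (a*(b::nat)) C f)"
proof
  assume psd: "psd_kernel (a'*a*b'*b) K"
  show "\<forall>f. 0 \<le> choi_qform (a'*b') (a*b) C f"
  proof
    fix f
    have "choi_qform (a'*b') (a*b) C f
        = qform (a'*a*b'*b) K (\<lambda>P. f ((P div (b*b'*a))*b' + (P div b) mod b') (((P div (b*b')) mod a)*b + P mod b))"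
      by (rule qform_choi_reorder[symmetric]) (simp_all add: K choi_index_decode)
    then show "0 \<le> choi_qform (a'*b') (a*b) C f" using psd unfolding psd_kernel_def by simp
  qed
next
  assume nonneg: "\<forall>f. 0 \<le> choi_qform (a'*b') (a*b) C f"
  show "psd_kernel (a'*a*b'*b) K"
    unfolding psd_kernel_def
  proof
    fix g
    have "qform (a'*a*b'*b) K g
        = choi_qform (a'*b') (a*b) C (\<lambda>p X. g (((p div b' * a + X div b)*b' + p mod b')*b + X mod b))"
      by (rule qform_choi_reorder) (simp_all add: K)
    then show "0 \<le> qform (a'*a*b'*b) K g" using nonneg by simp
  qed
qed

lemma choi_qform_divide_nonneg_iff:
  assumes "r > 0"
  shows "(\<forall>f. 0 \<le> choi_qform n m (\<lambda>p q x y. C p q x y / of_nat r) f) \<longleftrightarrow> (\<forall>f. 0 \<le> choi_qform n m C f)"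
proof -
  have "choi_qform n m (\<lambda>p q x y. C p q x y / of_nat r) f = choi_qform n m C f / of_nat r" for f
    unfolding choi_qform_def by (simp add: sum_divide_distrib)
  moreover have "0 \<le> z / of_nat r \<longleftrightarrow> 0 \<le> z" for z :: complex
    using assms by (simp add: less_eq_complex_def Re_divide_of_nat Im_divide_of_nat zero_le_divide_iff)
  ultimately show ?thesis by simp
qed

lemma choi_loewner_le_marginal_iff_choi_le:
  assumes "a' > 0" "b' > 0" and ns: "no_signaling_with a' b' a b N Q"
  shows "loewner_le (choi a' b' a b N)
           (of_real s \<cdot>\<^sub>m kron (1\<^sub>m (a'*a)) (ptrace_first (a'*a) (b'*b) (choi a' b' a b N)))
     \<longleftrightarrow> choi_le (a'*b') (a*b) N (of_real (real a' * s)) (replace_marginal a b N)"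
proof -
  define J where "J = choi a' b' a b N"
  define S where "S = kron (1\<^sub>m (a'*a)) (ptrace_first (a'*a) (b'*b) J)"
  define C where "C p q x y = of_real (real a' * s) * replace_marginal a b N (mat_unit (a'*b') p q) $$ (x,y)
      - N (mat_unit (a'*b') p q) $$ (x,y)" for p q x y
  have "S \<in> carrier_mat ((a'*a)*(b'*b)) ((a'*a)*(b'*b))"
    unfolding S_def by (rule kron_carrier) simp_all
  then have S: "S \<in> carrier_mat (a'*a*b'*b) (a'*a*b'*b)" by (simp add: mult.assoc)
  have K: "of_real s * S $$ (((rA*a + x)*b' + rB)*b + y, ((rA2*a + x2)*b' + rB2)*b + y2)
      - J $$ (((rA*a + x)*b' + rB)*b + y, ((rA2*a + x2)*b' + rB2)*b + y2)
    = C (rA*b' + rB) (rA2*b' + rB2) (x*b + y) (x2*b + y2) / of_nat (a'*b')"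
    if idx: "rA < a'" "x < a" "rB < b'" "y < b" "rA2 < a'" "x2 < a" "rB2 < b'" "y2 < b"
    for rA x rB y rA2 x2 rB2 y2
    unfolding S_def J_def C_def
    using choi_marginal_index[OF ns \<open>a' > 0\<close> idx] choi_index[OF idx, of N]
      replace_marginal_mat_unit_index[OF ns idx] assms(1,2)
    by (cases "rA = rA2 \<and> x = x2") (auto simp: field_simps)
  have "loewner_le J (of_real s \<cdot>\<^sub>m S) \<longleftrightarrow> psd_kernel (a'*a*b'*b) (\<lambda>P Q. of_real s * S $$ (P,Q) - J $$ (P,Q))"
    unfolding J_def by (rule loewner_le_scale_iff_psd_kernel[OF choi_carrier S])
  also have "\<dots> \<longleftrightarrow> (\<forall>f. 0 \<le> choi_qform (a'*b') (a*b) (\<lambda>p q x y. C p q x y / of_nat (a'*b')) f)"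
    by (rule psd_kernel_iff_choi_qform_reorder) (rule K)
  also have "\<dots> \<longleftrightarrow> (\<forall>f. 0 \<le> choi_qform (a'*b') (a*b) C f)"
    by (rule choi_qform_divide_nonneg_iff) (use assms(1,2) in simp)
  also have "\<dots> \<longleftrightarrow> choi_le (a'*b') (a*b) N (of_real (real a' * s)) (replace_marginal a b N)"
    unfolding choi_le_def C_def ..
  finally show ?thesis unfolding J_def S_def .
qed

lemma INF_add_ereal_const:
  fixes f :: "'a \<Rightarrow> ereal"
  shows "(INF i\<in>I. f i + ereal r) = (INF i\<in>I. f i) + ereal r"
proof (rule antisym)
  show "(INF i\<in>I. f i) + ereal r \<le> (INF i\<in>I. f i + ereal r)"
    by (rule INF_greatest) (intro add_right_mono INF_lower)
  have "(INF i\<in>I. f i + ereal r) + ereal (- r) \<le> (INF i\<in>I. f i + ereal r + ereal (- r))"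
    by (rule INF_greatest) (intro add_right_mono INF_lower)
  also have "\<dots> = (INF i\<in>I. f i)" by (simp add: add.assoc)
  finally have "(INF i\<in>I. f i + ereal r) + ereal (- r) + ereal r \<le> (INF i\<in>I. f i) + ereal r"
    by (rule add_right_mono)
  then show "(INF i\<in>I. f i + ereal r) \<le> (INF i\<in>I. f i) + ereal r"
    by (simp add: add.assoc)
qed

lemma INF_log_divide:
  assumes "c > 0" "\<And>t. t \<in> T \<Longrightarrow> t > 0"
  shows "(INF s\<in>(\<lambda>t. t / c) ` T. ereal (log 2 s)) = (INF t\<in>T. ereal (log 2 t)) - ereal (log 2 c)"
proof -
  have "(INF s\<in>(\<lambda>t. t / c) ` T. ereal (log 2 s)) = (INF t\<in>T. ereal (log 2 t) + ereal (- log 2 c))"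
    unfolding image_image
  proof (intro INF_cong refl)
    fix t assume "t \<in> T"
    then have "log 2 (t / c) = log 2 t - log 2 c"
      using assms by (intro log_divide_pos) auto
    then show "ereal (log 2 (t / c)) = ereal (log 2 t) + ereal (- log 2 c)" by simp
  qed
  also have "\<dots> = (INF t\<in>T. ereal (log 2 t)) + ereal (- log 2 c)"
    by (rule INF_add_ereal_const)
  finally show ?thesis by (simp add: minus_ereal_def)
qed

lemma Dinf_choi_marginal:
  assumes "a' > 0" "b' > 0" and ns: "no_signaling_with a' b' a b N Q"
  shows "Dinf (choi a' b' a b N) (kron (1\<^sub>m (a'*a)) (ptrace_first (a'*a) (b'*b) (choi a' b' a b N)))
    = (INF t\<in>{t. t > 0 \<and> choi_le (a'*b') (a*b) N (of_real t) (replace_marginal a b N)}. ereal (log 2 t))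
      - ereal (log 2 (real a'))"
    (is "Dinf ?J ?S = (INF t\<in>?T. _) - _")
proof -
  have "{s. s > 0 \<and> loewner_le ?J (of_real s \<cdot>\<^sub>m ?S)} = (\<lambda>t. t / real a') ` ?T"
  proof (intro equalityI subsetI)
    fix s assume "s \<in> {s. s > 0 \<and> loewner_le ?J (of_real s \<cdot>\<^sub>m ?S)}"
    then have "real a' * s \<in> ?T"
      using choi_loewner_le_marginal_iff_choi_le[OF assms] assms(1) by simp
    then show "s \<in> (\<lambda>t. t / real a') ` ?T"
      using assms(1) by (intro image_eqI[of _ _ "real a' * s"]) auto
  next
    fix s assume "s \<in> (\<lambda>t. t / real a') ` ?T"
    then obtain t where "t \<in> ?T" "s = t / real a'" by auto
    then show "s \<in> {s. s > 0 \<and> loewner_le ?J (of_real s \<cdot>\<^sub>m ?S)}"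
      using choi_loewner_le_marginal_iff_choi_le[OF assms, of s] assms(1) by simp
  qed
  then have "Dinf ?J ?S = (INF s\<in>(\<lambda>t. t / real a') ` ?T. ereal (log 2 s))"
    unfolding Dinf_def by (simp only:)
  also have "\<dots> = (INF t\<in>?T. ereal (log 2 t)) - ereal (log 2 (real a'))"
    by (rule INF_log_divide) (use assms(1) in auto)
  finally show ?thesis .
qed

lemma map_tensor_mat_unit:
  assumes M1: "\<And>i j. i < n1 \<Longrightarrow> j < n1 \<Longrightarrow> M1 (mat_unit n1 i j) \<in> carrier_mat m1 m1"
    and M2: "\<And>k l. k < n2 \<Longrightarrow> l < n2 \<Longrightarrow> M2 (mat_unit n2 k l) \<in> carrier_mat m2 m2"
    and idx: "i < n1" "j < n1" "k < n2" "l < n2"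
  shows "map_tensor n1 m1 n2 m2 M1 M2 (mat_unit (n1*n2) (i*n2 + k) (j*n2 + l))
    = kron (M1 (mat_unit n1 i j)) (M2 (mat_unit n2 k l))"
proof (rule eq_matI)
  fix P Q assume "P < dim_row (kron (M1 (mat_unit n1 i j)) (M2 (mat_unit n2 k l)))"
    "Q < dim_col (kron (M1 (mat_unit n1 i j)) (M2 (mat_unit n2 k l)))"
  then have PQ: "P < m1*m2" "Q < m1*m2" using kron_carrier[OF M1[OF idx(1,2)] M2[OF idx(3,4)]] by auto
  have "map_tensor n1 m1 n2 m2 M1 M2 (mat_unit (n1*n2) (i*n2 + k) (j*n2 + l)) $$ (P,Q)
    = (\<Sum>i'<n1. \<Sum>j'<n1. \<Sum>k'<n2. \<Sum>l'<n2. if i' = i \<and> j' = j then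
        (if k' = k \<and> l' = l then kron (M1 (mat_unit n1 i' j')) (M2 (mat_unit n2 k' l')) $$ (P,Q) else 0) else 0)"
    unfolding map_tensor_def using PQ idx
    by (auto intro!: sum.cong simp: mat_unit_index mult_add_less_mult mult_add_eq_mult_add_iff)
  also have "\<dots> = kron (M1 (mat_unit n1 i j)) (M2 (mat_unit n2 k l)) $$ (P,Q)"
    using idx by (simp add: sum4_delta sum_sum_delta)
  finally show "map_tensor n1 m1 n2 m2 M1 M2 (mat_unit (n1*n2) (i*n2 + k) (j*n2 + l)) $$ (P,Q)
    = kron (M1 (mat_unit n1 i j)) (M2 (mat_unit n2 k l)) $$ (P,Q)" .
qed (use kron_carrier[OF M1[OF idx(1,2)] M2[OF idx(3,4)]] in \<open>auto simp: map_tensor_def\<close>)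

lemma map_tensor_replace_one_mat_unit:
  assumes ns: "no_signaling_with a' b' a b N Q" and pq: "p < a'*b'" "q < a'*b'"
  shows "map_tensor a' a b' b (replace_one a) Q (mat_unit (a'*b') p q) = replace_marginal a b N (mat_unit (a'*b') p q)"
proof -
  have "b' > 0" using pq by (cases b') auto
  define pA pB qA qB where "pA = p div b'" and "pB = p mod b'" and "qA = q div b'" and "qB = q mod b'"
  have idx: "pA < a'" "qA < a'" "pB < b'" "qB < b'"
    using pq \<open>b' > 0\<close> unfolding pA_def qA_def pB_def qB_def by (auto simp: less_mult_imp_div_less)
  have pq_split: "p = pA*b' + pB" "q = qA*b' + qB"
    unfolding pA_def qA_def pB_def qB_def by simp_all
  have chQ: "is_channel b' b Q" using ns unfolding no_signaling_with_def ..
  have Q: "Q (mat_unit b' pB qB) \<in> carrier_mat b b" using channel_carrier[OF chQ] by simp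
  have "map_tensor a' a b' b (replace_one a) Q (mat_unit (a'*b') p q)
      = kron (replace_one a (mat_unit a' pA qA)) (Q (mat_unit b' pB qB))"
    unfolding pq_split
    by (rule map_tensor_mat_unit[OF _ _ idx(1,2,3,4)]) (auto simp: replace_one_def channel_carrier[OF chQ])
  moreover have "replace_one a (mat_unit a' pA qA) = (if pA = qA then 1\<^sub>m a else 0\<^sub>m a a)"
    using idx by (auto simp: replace_one_def mtrace_mat_unit intro!: eq_matI)
  moreover have "ptrace_first a b (N (mat_unit (a'*b') p q)) = (if pA = qA then Q (mat_unit b' pB qB) else 0\<^sub>m b b)"
    using ns idx channel_zero[OF chQ]
    by (simp add: no_signaling_with_def pq_split ptrace_first_mat_unit mult_add_less_mult)
  moreover have "kron (0\<^sub>m a a) (Q (mat_unit b' pB qB)) = kron (1\<^sub>m a) (0\<^sub>m b b)"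
  proof (rule eq_matI)
    fix i j assume "i < dim_row (kron (1\<^sub>m a) (0\<^sub>m b b))" "j < dim_col (kron (1\<^sub>m a) (0\<^sub>m b b))"
    then have "i < a*b" "j < a*b" by (simp_all add: kron_def)
    moreover from this have "b > 0" by (cases b) auto
    ultimately have "i div b < a" "j div b < a" "i mod b < b" "j mod b < b"
      by (simp_all add: less_mult_imp_div_less)
    then show "kron (0\<^sub>m a a) (Q (mat_unit b' pB qB)) $$ (i,j) = kron (1\<^sub>m a) (0\<^sub>m b b) $$ (i,j)"
      using \<open>i < a*b\<close> \<open>j < a*b\<close> Q by (simp add: kron_def)
  qed (use Q in \<open>simp_all add: kron_def\<close>)
  ultimately show ?thesis
    unfolding replace_marginal_def by (cases "pA = qA") simp_all
qed

theorem lemma3: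
  fixes a' b' a b :: nat and N :: "complex mat \<Rightarrow> complex mat"
  assumes "a' > 0" and "b' > 0" and "a > 0" and "b > 0"
    and "is_channel (a'*b') (a*b) N"
    and "no_signaling a' b' a b N"
  shows "S_down (a'*a) (b'*b) (choi a' b' a b N) - ereal (log 2 (real a')) = S_nosig a' b' a b N
         \<and> S_nosig a' b' a b N \<le> S_inf a' b' a b N"
proof -
  obtain Q where ns: "no_signaling_with a' b' a b N Q"
    using assms(6) unfolding no_signaling_def no_signaling_with_def by blast
  define D where "D = (INF t\<in>{t. t > 0 \<and> choi_le (a'*b') (a*b) N (of_real t) (replace_marginal a b N)}.
                         ereal (log 2 t))"
  have D_marginal: "Dchan (a'*b') (a*b) N (replace_marginal a b N) = D"
    unfolding D_def using assms(1,2) channel_carrier[OF assms(5)] by (intro Dchan_eq_INF_choi_le) simp_all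
  have "id_tensor k (a'*b') (a*b) (map_tensor a' a b' b (replace_one a) Q)
      = id_tensor k (a'*b') (a*b) (replace_marginal a b N)" for k
    by (rule id_tensor_cong) (rule map_tensor_replace_one_mat_unit[OF ns])
  then have D_replace: "Dchan (a'*b') (a*b) N (map_tensor a' a b' b (replace_one a) Q) = D"
    using D_marginal by (simp add: Dchan_def)
  have nosig: "S_nosig a' b' a b N = - D"
    unfolding S_nosig_def D_marginal[symmetric] by (simp add: replace_marginal_def[abs_def])
  have "S_down (a'*a) (b'*b) (choi a' b' a b N) = - (D - ereal (log 2 (real a')))"
    unfolding S_down_def D_def Dinf_choi_marginal[OF assms(1,2) ns] ..
  then have "S_down (a'*a) (b'*b) (choi a' b' a b N) - ereal (log 2 (real a')) = S_nosig a' b' a b N"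
    unfolding nosig by (cases D) simp_all
  moreover have "is_channel b' b Q" using ns unfolding no_signaling_with_def ..
  then have "(INF Q\<in>{Q. is_channel b' b Q}. Dchan (a'*b') (a*b) N (map_tensor a' a b' b (replace_one a) Q)) \<le> D"
    using D_replace by (intro INF_lower2[of Q]) simp_all
  then have "S_nosig a' b' a b N \<le> S_inf a' b' a b N"
    unfolding nosig S_inf_def by simp
  ultimately show ?thesis ..
qed

end
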